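(* Let $A\in\mathbb{R}^{n\times n}$, $t\ge0$, and $\Omega=c+G\mathbf{B}_p$ with $c\in\mathbb{R}^n$, $G\in\mathbb{R}^{n\times p}$, $\mathrm{rank}(G)=n$. Then for every $k\in\mathbb{N}$ with $\lambda(t,\Omega,k)\ge0$, $$\mathcal{L}(t,k)\bigl[c+\lambda(t,\Omega,k)G\mathbf{B}_p\bigr]\subseteq\mathrm{e}^{tA}\Omega.$$
   Context: A norm $\|\cdot\|$ is fixed on each $\mathbb{R}^k$, $\mathbf{B}_k$ is its closed unit ball, and matrices carry induced operator norms. $G^\dagger$ is the Moore–Penrose inverse. $\mathcal{L}(t,k)=\sum_{j=0}^{k-1}(tA)^j/j!$. $\theta(r,k)=\sum_{j=k}^\infty r^j/j!$ for $r\ge0$, $k\in\mathbb{N}$. For $\Omega$ given with its representation $(c,G)$, the deflation coefficient is $$\lambda(t,\Omega,k)=\frac{1-\mathrm{e}^{t\|A\|}\theta(t\|A\|,k)\|G^\dagger\|\|c\|}{1+\mathrm{e}^{t\|A\|}\theta(t\|A\|,k)\|G^\dagger\|\|G\|}.$$ *)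

theory Defs
  imports "HOL-Analysis.Analysis"
begin

definition is_norm :: "('a::real_vector \<Rightarrow> real) \<Rightarrow> bool" where
  "is_norm N \<longleftrightarrow> (\<forall>x. 0 \<le> N x) \<and> (\<forall>x. N x = 0 \<longleftrightarrow> x = 0)
     \<and> (\<forall>a x. N (a *\<^sub>R x) = \<bar>a\<bar> * N x) \<and> (\<forall>x y. N (x + y) \<le> N x + N y)"

definition unit_ball :: "('a \<Rightarrow> real) \<Rightarrow> 'a set" where
  "unit_ball N = {x. N x \<le> 1}"

definition op_norm :: "(real^'q \<Rightarrow> real) \<Rightarrow> (real^'m \<Rightarrow> real) \<Rightarrow> real^'q^'m \<Rightarrow> real" where
  "op_norm Nin Nout M = Sup {Nout (M *v x) | x. Nin x \<le> 1}"

definition mp_inverse :: "real^'p^'n \<Rightarrow> real^'n^'p" where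
  "mp_inverse G = (THE X. G ** X ** G = G \<and> X ** G ** X = X
      \<and> transpose (G ** X) = G ** X \<and> transpose (X ** G) = X ** G)"

definition matpow :: "real^'n^'n \<Rightarrow> nat \<Rightarrow> real^'n^'n" where
  "matpow A j = ((\<lambda>M. A ** M) ^^ j) (mat 1)"

definition mexp :: "real^'n^'n \<Rightarrow> real^'n^'n" where
  "mexp M = (\<Sum>j. (1 / fact j) *\<^sub>R matpow M j)"

definition Ltrunc :: "real^'n^'n \<Rightarrow> real \<Rightarrow> nat \<Rightarrow> real^'n^'n" where
  "Ltrunc A t k = (\<Sum>j<k. (1 / fact j) *\<^sub>R matpow (t *\<^sub>R A) j)"

definition theta :: "real \<Rightarrow> nat \<Rightarrow> real" where
  "theta r k = (\<Sum>j. r ^ (j + k) / fact (j + k))"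

text \<open>Deflation coefficient lambda(t,Omega,k) for Omega = c + G B_p; Nn, Np are the norms on R^n, R^p.\<close>
definition deflation :: "(real^'n \<Rightarrow> real) \<Rightarrow> (real^'p \<Rightarrow> real) \<Rightarrow> real^'n^'n \<Rightarrow> real
     \<Rightarrow> real^'n \<Rightarrow> real^'p^'n \<Rightarrow> nat \<Rightarrow> real" where
  "deflation Nn Np A t c G k =
     (let a = op_norm Nn Nn A;
          q = exp (t * a) * theta (t * a) k * op_norm Nn Np (mp_inverse G)
      in (1 - q * Nn c) / (1 + q * op_norm Np Nn G))"

end

theory Submission
  imports Defs
begin

text \<open>Write M = e^{tA}, L = L(t,k) and X = G^\<dagger>, so G X = I by the rank hypothesis. For
  y = c + \<lambda> G b the point b' = \<lambda> b - X M^-1 (M - L) y satisfies M (c + G b') = L y, so it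
  remains to show that b' lies in the unit ball. The tail bound |(M - L) y| \<le> \<theta>(t|A|,k) |y| and
  |M^-1| \<le> e^{t|A|} follow by comparing the exponential series term by term with the scalar one,
  and then |b'| \<le> \<lambda> + e^{t|A|} \<theta>(t|A|,k) |X| (|c| + \<lambda> |G|), which equals 1 by the choice of \<lambda>.\<close>

section \<open>General norms on finite-dimensional spaces\<close>

lemma is_norm_nonneg: "is_norm N \<Longrightarrow> 0 \<le> N x"
  by (simp add: is_norm_def)

lemma is_norm_eq_0_iff: "is_norm N \<Longrightarrow> N x = 0 \<longleftrightarrow> x = 0"
  by (simp add: is_norm_def)

lemma is_norm_scaleR: "is_norm N \<Longrightarrow> N (a *\<^sub>R x) = \<bar>a\<bar> * N x"
  by (simp add: is_norm_def)

lemma is_norm_triangle: "is_norm N \<Longrightarrow> N (x + y) \<le> N x + N y"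
  by (simp add: is_norm_def)

lemma is_norm_zero: "is_norm N \<Longrightarrow> N 0 = 0"
  by (simp add: is_norm_def)

lemma is_norm_minus: "is_norm N \<Longrightarrow> N (- x) = N x"
  using is_norm_scaleR[of N "-1" x] by simp

lemma is_norm_diff_le: "is_norm N \<Longrightarrow> N (x - y) \<le> N x + N y"
  by (metis diff_conv_add_uminus is_norm_minus is_norm_triangle)

lemma is_norm_sum_le: "is_norm N \<Longrightarrow> N (sum f S) \<le> (\<Sum>i\<in>S. N (f i))"
  by (induction S rule: infinite_finite_induct)
    (auto simp: is_norm_zero intro: order_trans[OF is_norm_triangle])

lemma is_norm_norm: "is_norm norm"
  by (simp add: is_norm_def norm_triangle_ineq)

lemma is_norm_convex: "is_norm N \<Longrightarrow> convex_on UNIV N"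
proof (rule convex_onI)
  fix t :: real and x y
  assume "is_norm N" "0 < t" "t < 1"
  then show "N ((1 - t) *\<^sub>R x + t *\<^sub>R y) \<le> (1 - t) * N x + t * N y"
    by (metis abs_of_pos diff_gt_0_iff_gt is_norm_scaleR is_norm_triangle)
qed simp

lemma is_norm_continuous_on:
  fixes N :: "'a::euclidean_space \<Rightarrow> real"
  shows "is_norm N \<Longrightarrow> continuous_on S N"
  using convex_on_continuous[OF open_UNIV is_norm_convex] continuous_on_subset by blast

lemma is_norm_tendsto:
  fixes N :: "'a::euclidean_space \<Rightarrow> real"
  assumes "is_norm N" and "(f \<longlongrightarrow> l) F"
  shows "((\<lambda>x. N (f x)) \<longlongrightarrow> N l) F"
  using continuous_on_tendsto_compose[OF is_norm_continuous_on[where S=UNIV, OF assms(1)] assms(2)] by simp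

lemma is_norm_sums_le:
  fixes N :: "'a::euclidean_space \<Rightarrow> real"
  assumes N: "is_norm N" and "f sums s" and "g sums S" and "\<And>j. N (f j) \<le> g j"
  shows "N s \<le> S"
proof (rule LIMSEQ_le)
  show "(\<lambda>n. N (\<Sum>i<n. f i)) \<longlonglongrightarrow> N s"
    using is_norm_tendsto[OF N] \<open>f sums s\<close> by (simp add: sums_def)
  show "(\<lambda>n. \<Sum>i<n. g i) \<longlonglongrightarrow> S"
    using \<open>g sums S\<close> by (simp add: sums_def)
  show "\<exists>M. \<forall>n\<ge>M. N (\<Sum>i<n. f i) \<le> (\<Sum>i<n. g i)"
    using assms(4) by (intro exI[of _ 0] allI impI order_trans[OF is_norm_sum_le[OF N] sum_mono])
qed

lemma is_norm_dominates_norm: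
  fixes N :: "'a::euclidean_space \<Rightarrow> real"
  assumes N: "is_norm N"
  obtains k where "k \<ge> 0" "\<And>x. norm x \<le> k * N x"
proof -
  have "sphere (0::'a) 1 \<noteq> {}"
    using vector_choose_size[of 1] by auto
  then obtain x0 where x0: "x0 \<in> sphere 0 1" and min: "\<And>y. y \<in> sphere 0 1 \<Longrightarrow> N x0 \<le> N y"
    using continuous_attains_inf[OF compact_sphere _ is_norm_continuous_on[OF N]] by meson
  have pos: "N x0 > 0"
    using x0 is_norm_nonneg[OF N, of x0] is_norm_eq_0_iff[OF N, of x0] by auto
  have "norm x \<le> 1 / N x0 * N x" for x
  proof (cases "x = 0")
    case False
    then have "N x0 \<le> N ((1 / norm x) *\<^sub>R x)"
      by (intro min) simp
    also have "\<dots> = N x / norm x"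
      using is_norm_scaleR[OF N] by simp
    finally show ?thesis
      using False pos by (simp add: field_simps)
  qed (simp add: is_norm_zero[OF N])
  with pos show thesis
    by (intro that[of "1 / N x0"]) simp_all
qed

lemma compact_unit_ball:
  fixes N :: "'a::euclidean_space \<Rightarrow> real"
  assumes N: "is_norm N"
  shows "compact (unit_ball N)"
  unfolding compact_eq_bounded_closed
proof
  obtain k where "k \<ge> 0" "\<And>x. norm x \<le> k * N x"
    using is_norm_dominates_norm[OF N] by blast
  then have "norm x \<le> k" if "N x \<le> 1" for x
    using that by (meson mult_left_le order_trans)
  then show "bounded (unit_ball N)"
    unfolding bounded_iff unit_ball_def by blast
  show "closed (unit_ball N)"
    unfolding unit_ball_def
    by (intro closed_Collect_le continuous_on_const is_norm_continuous_on[OF N])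
qed

lemma op_norm_upper:
  fixes Nin :: "real^'q \<Rightarrow> real" and Nout :: "real^'m \<Rightarrow> real"
  assumes Nin: "is_norm Nin" and Nout: "is_norm Nout" and "Nin x \<le> 1"
  shows "Nout (M *v x) \<le> op_norm Nin Nout M"
proof -
  have "compact ((\<lambda>x. Nout (M *v x)) ` unit_ball Nin)"
    by (intro compact_continuous_image compact_unit_ball Nin
        continuous_on_compose2[OF is_norm_continuous_on[OF Nout]] continuous_intros) auto
  then have "bdd_above ((\<lambda>x. Nout (M *v x)) ` unit_ball Nin)"
    by (intro bounded_imp_bdd_above compact_imp_bounded)
  moreover have "{Nout (M *v x) | x. Nin x \<le> 1} = (\<lambda>x. Nout (M *v x)) ` unit_ball Nin"
    by (auto simp: unit_ball_def)
  ultimately show ?thesis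
    unfolding op_norm_def using \<open>Nin x \<le> 1\<close> by (auto intro!: cSup_upper simp: unit_ball_def)
qed

lemma op_norm_nonneg:
  fixes Nin :: "real^'q \<Rightarrow> real" and Nout :: "real^'m \<Rightarrow> real"
  shows "is_norm Nin \<Longrightarrow> is_norm Nout \<Longrightarrow> 0 \<le> op_norm Nin Nout M"
  using op_norm_upper[of Nin Nout 0 M] by (simp add: is_norm_zero)

lemma op_norm_le:
  fixes Nin :: "real^'q \<Rightarrow> real" and Nout :: "real^'m \<Rightarrow> real"
  assumes Nin: "is_norm Nin" and Nout: "is_norm Nout"
  shows "Nout (M *v x) \<le> op_norm Nin Nout M * Nin x"
proof (cases "x = 0")
  case True
  then show ?thesis by (simp add: is_norm_zero[OF Nin] is_norm_zero[OF Nout])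
next
  case False
  then have pos: "Nin x > 0"
    using is_norm_nonneg[OF Nin, of x] is_norm_eq_0_iff[OF Nin, of x] by auto
  have "Nout (M *v x) / Nin x = Nout (M *v ((1 / Nin x) *\<^sub>R x))"
    using pos
    by (simp add: is_norm_scaleR[OF Nout] matrix_scaleR_vector_ac scaleR_matrix_vector_assoc[symmetric])
  also have "\<dots> \<le> op_norm Nin Nout M"
    using pos by (intro op_norm_upper Nin Nout) (simp add: is_norm_scaleR[OF Nin])
  finally show ?thesis
    using pos by (simp add: field_simps)
qed

section \<open>The matrix exponential\<close>

lemma matpow_0 [simp]: "matpow A 0 = mat 1"
  by (simp add: matpow_def)

lemma matpow_Suc: "matpow A (Suc j) = A ** matpow A j"
  by (simp add: matpow_def)

lemma matpow_scaleR: "matpow (s *\<^sub>R A) j = s ^ j *\<^sub>R matpow A j"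
  by (induction j) (simp_all add: matpow_Suc scalar_matrix_assoc matrix_scalar_ac mult.commute)

lemma matpow_add: "matpow A i ** matpow A j = matpow A (i + j)"
  by (induction i) (simp_all add: matpow_Suc, metis matrix_mul_assoc)

lemma is_norm_matpow_le:
  fixes A :: "real^'n^'n"
  assumes N: "is_norm N"
  shows "N (matpow A j *v y) \<le> op_norm N N A ^ j * N y"
proof (induction j)
  case (Suc j)
  have "N (matpow A (Suc j) *v y) = N (A *v (matpow A j *v y))"
    by (simp add: matpow_Suc matrix_vector_mul_assoc)
  also have "\<dots> \<le> op_norm N N A * N (matpow A j *v y)"
    by (rule op_norm_le[OF N N])
  also have "\<dots> \<le> op_norm N N A * (op_norm N N A ^ j * N y)"
    by (intro mult_left_mono Suc op_norm_nonneg[OF N N])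
  finally show ?case by simp
qed simp

lemma abs_matpow_component_le:
  fixes A :: "real^'n^'n"
  shows "\<bar>matpow A j $ r $ l\<bar> \<le> op_norm norm norm A ^ j"
proof -
  have "\<bar>matpow A j $ r $ l\<bar> = \<bar>(matpow A j *v axis l 1) $ r\<bar>"
    by (simp add: matrix_vector_mult_basis column_def)
  also have "\<dots> \<le> norm (matpow A j *v axis l 1)"
    by (rule component_le_norm_cart)
  also have "\<dots> \<le> op_norm norm norm A ^ j"
    using is_norm_matpow_le[OF is_norm_norm, of A j "axis l 1"] by (simp add: norm_axis_1)
  finally show ?thesis .
qed

lemma summable_matrixI:
  fixes f :: "nat \<Rightarrow> real^'n^'m"
  assumes "\<And>r l. summable (\<lambda>j. f j $ r $ l)"
  shows "summable f"
proof -
  have "f sums (\<chi> r l. \<Sum>j. f j $ r $ l)"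
    unfolding sums_def by (intro vec_tendstoI) (simp add: sum_component summable_LIMSEQ assms)
  then show ?thesis by (rule sums_summable)
qed

lemma sums_matrix_component:
  fixes f :: "nat \<Rightarrow> real^'n^'m"
  assumes "summable f"
  shows "(\<lambda>j. f j $ r $ l) sums (suminf f $ r $ l)"
  using tendsto_vec_nth[OF tendsto_vec_nth[OF summable_LIMSEQ[OF assms]], of r l]
  by (simp add: sums_def sum_component)

lemma summable_exp_terms: "summable (\<lambda>n. (x::real) ^ n / fact n)"
  using summable_exp[of x] by (simp add: divide_inverse mult.commute)

lemma summable_abs_mexp_component:
  fixes A :: "real^'n^'n"
  shows "summable (\<lambda>j. \<bar>((1 / fact j) *\<^sub>R matpow A j) $ r $ l\<bar>)"
proof (rule summable_comparison_test[OF _ summable_exp_terms[of "op_norm norm norm A"]])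
  show "\<exists>N. \<forall>j\<ge>N. norm \<bar>((1 / fact j) *\<^sub>R matpow A j) $ r $ l\<bar> \<le> op_norm norm norm A ^ j / fact j"
    using abs_matpow_component_le[of A _ r l] by (auto simp: divide_right_mono)
qed

lemma sums_mexp: "(\<lambda>j. (1 / fact j) *\<^sub>R matpow A j) sums mexp A"
proof -
  have "summable (\<lambda>j. (1 / fact j) *\<^sub>R matpow A j)"
    by (rule summable_matrixI, rule summable_rabs_cancel, rule summable_abs_mexp_component)
  then show ?thesis
    unfolding mexp_def by (rule summable_sums)
qed

lemma bounded_linear_matrix_vector_mult_left: "bounded_linear (\<lambda>M::real^'n^'m. M *v y)"
  by (auto intro!: bounded_linearI' simp: matrix_vector_mult_add_rdistrib scaleR_matrix_vector_assoc)

lemma sums_mexp_mult_vector: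
  fixes A :: "real^'n^'n"
  shows "(\<lambda>j. (1 / fact j) *\<^sub>R (matpow A j *v y)) sums (mexp A *v y)"
  using bounded_linear.sums[OF bounded_linear_matrix_vector_mult_left sums_mexp]
  by (simp add: scaleR_matrix_vector_assoc)

lemma sum_inverse_fact_alternating:
  "(\<Sum>i\<le>k. (1 / fact i) * (1 / fact (k - i)) * (-1::real) ^ (k - i)) = (if k = 0 then 1 else 0)"
proof -
  have "(\<Sum>i\<le>k. (1 / fact i) * (1 / fact (k - i)) * (-1::real) ^ (k - i))
      = (\<Sum>i\<le>k. of_nat (k choose i) * 1 ^ i * (-1::real) ^ (k - i)) / fact k"
    unfolding sum_divide_distrib by (intro sum.cong refl) (simp add: binomial_fact field_simps)
  also have "\<dots> = (1 + (-1::real)) ^ k / fact k"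
    by (simp only: binomial_ring)
  finally show ?thesis by simp
qed

text \<open>The Cauchy product is taken entrywise, since the matrix type carries no normed algebra
  structure.\<close>
lemma mexp_mult_mexp_uminus:
  fixes A :: "real^'n^'n"
  shows "mexp A ** mexp (- A) = mat 1"
proof -
  define a where "a j = (1 / fact j) *\<^sub>R matpow A j" for j
  define b where "b j = (1 / fact j) *\<^sub>R matpow (- A) j" for j
  have mexp: "mexp A = suminf a" "mexp (- A) = suminf b"
    by (simp_all add: mexp_def a_def[abs_def] b_def[abs_def])
  have summable: "summable a" "summable b"
    using sums_summable[OF sums_mexp] by (simp_all add: a_def[abs_def] b_def[abs_def])
  have prod: "a i ** b j = ((1 / fact i) * (1 / fact j) * (-1) ^ j) *\<^sub>R matpow A (i + j)" for i j
    using matpow_scaleR[of "-1" A j]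
    by (simp add: a_def b_def matrix_scalar_ac scalar_matrix_assoc[symmetric] matpow_add mult.commute)
  have coeff: "(\<Sum>i\<le>k. (a i ** b (k - i)) $ r $ l) = (if k = 0 then mat 1 $ r $ l else 0)" for k r l
  proof -
    have "(\<Sum>i\<le>k. (a i ** b (k - i)) $ r $ l)
        = (\<Sum>i\<le>k. (1 / fact i) * (1 / fact (k - i)) * (-1::real) ^ (k - i)) * matpow A k $ r $ l"
      by (simp add: prod sum_distrib_right)
    also have "\<dots> = (if k = 0 then 1 else 0) * matpow A k $ r $ l"
      by (simp only: sum_inverse_fact_alternating)
    finally show ?thesis by simp
  qed
  have series: "(\<lambda>k. \<Sum>i\<le>k. (a i ** b (k - i)) $ r $ l) sums ((mexp A ** mexp (- A)) $ r $ l)"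
    for r l
  proof -
    have "(\<lambda>k. \<Sum>i\<le>k. a i $ r $ m * b (k - i) $ m $ l) sums (mexp A $ r $ m * mexp (- A) $ m $ l)"
      for m
    proof -
      have "(\<lambda>k. \<Sum>i\<le>k. a i $ r $ m * b (k - i) $ m $ l) sums ((\<Sum>k. a k $ r $ m) * (\<Sum>k. b k $ m $ l))"
        using summable_abs_mexp_component[of A r m] summable_abs_mexp_component[of "- A" m l]
        by (intro Cauchy_product_sums) (simp_all add: a_def b_def)
      moreover have "(\<Sum>k. a k $ r $ m) = mexp A $ r $ m" "(\<Sum>k. b k $ m $ l) = mexp (- A) $ m $ l"
        unfolding mexp
        by (rule sums_unique[OF sums_matrix_component[OF summable(1)], symmetric],
            rule sums_unique[OF sums_matrix_component[OF summable(2)], symmetric])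
      ultimately show ?thesis by simp
    qed
    moreover have "(\<Sum>m\<in>UNIV. \<Sum>i\<le>k. a i $ r $ m * b (k - i) $ m $ l) = (\<Sum>i\<le>k. (a i ** b (k - i)) $ r $ l)"
      for k
      by (subst sum.swap) (simp add: matrix_matrix_mult_def)
    ultimately show ?thesis
      using sums_sum[of UNIV "\<lambda>m k. \<Sum>i\<le>k. a i $ r $ m * b (k - i) $ m $ l"
          "\<lambda>m. mexp A $ r $ m * mexp (- A) $ m $ l"]
      by (simp add: matrix_matrix_mult_def)
  qed
  have "(mexp A ** mexp (- A)) $ r $ l = mat 1 $ r $ l" for r l
    using series[of r l] sums_single[of 0 "\<lambda>_. mat 1 $ r $ l :: real"] unfolding coeff
    by (simp add: sums_unique2)
  then show ?thesis
    by (simp add: vec_eq_iff)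
qed

lemma theta_sums: "(\<lambda>j. r ^ (j + k) / fact (j + k)) sums theta r k"
  unfolding theta_def
  by (rule summable_sums) (subst summable_iff_shift, rule summable_exp_terms)

lemma theta_nonneg: "r \<ge> 0 \<Longrightarrow> theta r k \<ge> 0"
  by (rule sums_le[OF _ sums_zero theta_sums]) simp

lemma is_norm_exp_term_le:
  fixes A :: "real^'n^'n"
  assumes N: "is_norm N"
  shows "N ((1 / fact i) *\<^sub>R (matpow (s *\<^sub>R A) i *v y)) \<le> (\<bar>s\<bar> * op_norm N N A) ^ i / fact i * N y"
proof -
  have "matpow (s *\<^sub>R A) i *v y = s ^ i *\<^sub>R (matpow A i *v y)"
    by (simp add: matpow_scaleR scaleR_matrix_vector_assoc)
  then have "N ((1 / fact i) *\<^sub>R (matpow (s *\<^sub>R A) i *v y))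
      = (1 / fact i) * (\<bar>s\<bar> ^ i * N (matpow A i *v y))"
    by (simp only: is_norm_scaleR[OF N] power_abs abs_divide abs_one abs_of_nonneg[OF fact_ge_zero])
  also have "\<dots> \<le> (1 / fact i) * (\<bar>s\<bar> ^ i * (op_norm N N A ^ i * N y))"
    by (intro mult_left_mono is_norm_matpow_le[OF N]) auto
  finally show ?thesis by (simp add: power_mult_distrib)
qed

lemma is_norm_mexp_minus_Ltrunc_le:
  fixes A :: "real^'n^'n"
  assumes N: "is_norm N" and "t \<ge> 0"
  shows "N ((mexp (t *\<^sub>R A) - Ltrunc A t k) *v y) \<le> theta (t * op_norm N N A) k * N y"
proof -
  define f where "f j = (1 / fact j) *\<^sub>R (matpow (t *\<^sub>R A) j *v y)" for j
  have "Ltrunc A t k *v y = (\<Sum>j<k. f j)"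
    unfolding Ltrunc_def f_def
    by (simp add: real_vector.linear_sum[OF bounded_linear.linear[OF bounded_linear_matrix_vector_mult_left]]
        scaleR_matrix_vector_assoc)
  moreover have "f sums (mexp (t *\<^sub>R A) *v y)"
    unfolding f_def by (rule sums_mexp_mult_vector)
  ultimately have tail: "(\<lambda>j. f (j + k)) sums ((mexp (t *\<^sub>R A) - Ltrunc A t k) *v y)"
    using sums_iff_shift'[of f k] by (simp add: matrix_vector_mult_diff_rdistrib)
  show ?thesis
    using is_norm_exp_term_le[OF N, of "j + k" t A y for j] \<open>t \<ge> 0\<close>
    by (intro is_norm_sums_le[OF N tail sums_mult2[OF theta_sums]]) (simp add: f_def)
qed

lemma is_norm_mexp_uminus_le:
  fixes A :: "real^'n^'n"
  assumes N: "is_norm N" and "t \<ge> 0"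
  shows "N (mexp (- (t *\<^sub>R A)) *v z) \<le> exp (t * op_norm N N A) * N z"
proof -
  have "(\<lambda>j. (t * op_norm N N A) ^ j / fact j) sums exp (t * op_norm N N A)"
    using exp_converges[of "t * op_norm N N A"] by (simp add: divide_inverse mult.commute)
  then show ?thesis
  proof (rule is_norm_sums_le[OF N sums_mexp_mult_vector sums_mult2])
    show "N ((1 / fact j) *\<^sub>R (matpow (- (t *\<^sub>R A)) j *v z)) \<le> (t * op_norm N N A) ^ j / fact j * N z"
      for j
      using is_norm_exp_term_le[OF N, of j "- t" A z] \<open>t \<ge> 0\<close> by simp
  qed
qed

section \<open>The Moore--Penrose inverse of a matrix of full row rank\<close>

definition is_penrose_inverse :: "real^'p^'n \<Rightarrow> real^'n^'p \<Rightarrow> bool" where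
  "is_penrose_inverse G X \<longleftrightarrow> G ** X ** G = G \<and> X ** G ** X = X
      \<and> transpose (G ** X) = G ** X \<and> transpose (X ** G) = X ** G"

lemma is_penrose_inverse_transpose:
  "is_penrose_inverse G X \<Longrightarrow> is_penrose_inverse (transpose G) (transpose X)"
  unfolding is_penrose_inverse_def by (metis matrix_transpose_mul matrix_mul_assoc)

lemma is_penrose_inverse_absorb:
  assumes X: "is_penrose_inverse G X" and Y: "is_penrose_inverse G Y"
  shows "X = X ** G ** Y"
proof -
  from X have x2: "X ** G ** X = X" and x3: "transpose (G ** X) = G ** X"
    by (auto simp: is_penrose_inverse_def)
  from Y have y1: "G ** Y ** G = G" and y3: "transpose (G ** Y) = G ** Y"
    by (auto simp: is_penrose_inverse_def)
  have "X = X ** transpose (G ** X)"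
    using x2 x3 by (simp add: matrix_mul_assoc)
  also have "\<dots> = X ** transpose X ** transpose (G ** Y ** G)"
    using y1 by (simp add: matrix_transpose_mul matrix_mul_assoc)
  also have "\<dots> = X ** transpose (G ** X) ** transpose (G ** Y)"
    by (simp add: matrix_transpose_mul matrix_mul_assoc)
  also have "\<dots> = X ** G ** Y"
    using x2 x3 y3 by (simp add: matrix_mul_assoc)
  finally show ?thesis .
qed

lemma is_penrose_inverse_unique:
  assumes X: "is_penrose_inverse G X" and Y: "is_penrose_inverse G Y"
  shows "X = Y"
proof -
  have "transpose X = transpose X ** transpose G ** transpose Y"
    using is_penrose_inverse_absorb[OF X[THEN is_penrose_inverse_transpose]
        Y[THEN is_penrose_inverse_transpose]] .
  then have "X = Y ** G ** X"
    by (metis matrix_transpose_mul matrix_mul_assoc transpose_transpose)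
  also have "\<dots> = Y"
    using is_penrose_inverse_absorb[OF Y X] by simp
  finally show ?thesis .
qed

lemma mp_inverse_eqI: "is_penrose_inverse G X \<Longrightarrow> mp_inverse G = X"
  unfolding mp_inverse_def
  by (rule the_equality) (auto simp: is_penrose_inverse_def[symmetric] intro: is_penrose_inverse_unique)

lemma mp_inverse_right_inverse:
  fixes G :: "real^'p^'n"
  assumes "rank G = CARD('n)"
  shows "G ** mp_inverse G = mat 1"
proof -
  define S where "S = G ** transpose G"
  have "x = 0" if "S *v x = 0" for x
  proof -
    have "(transpose G *v x) \<bullet> (transpose G *v x) = x \<bullet> (S *v x)"
      by (simp add: S_def dot_lmul_matrix matrix_vector_mul_assoc[symmetric])
    then have "transpose G *v x = transpose G *v 0"
      using that by simp
    moreover have "inj ((*v) (transpose G))"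
      using assms full_rank_injective[of "transpose G"] by (simp add: rank_transpose)
    ultimately show "x = 0"
      by (meson injD)
  qed
  then obtain B where BS: "B ** S = mat 1"
    using matrix_left_invertible_ker by blast
  then have SB: "S ** B = mat 1"
    using matrix_left_right_inverse by blast
  have "transpose B ** S = mat 1"
    using arg_cong[OF SB, of transpose] by (simp add: S_def matrix_transpose_mul matrix_mul_assoc)
  then have B_sym: "transpose B = B"
    by (metis SB matrix_mul_assoc matrix_mul_lid matrix_mul_rid)
  define X where "X = transpose G ** B"
  have GX: "G ** X = mat 1"
    using SB by (simp add: X_def S_def matrix_mul_assoc)
  have "is_penrose_inverse G X"
    unfolding is_penrose_inverse_def
    using GX by (simp add: X_def matrix_transpose_mul B_sym matrix_mul_assoc[symmetric])
  with GX show ?thesis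
    by (simp add: mp_inverse_eqI)
qed

section \<open>Inner approximation of the reachable set\<close>

lemma image_deflated_zonotope_subset:
  fixes Nn :: "real^'n \<Rightarrow> real" and Np :: "real^'p \<Rightarrow> real"
    and L M M' :: "real^'n^'n" and G :: "real^'p^'n" and X :: "real^'n^'p"
  assumes Nn: "is_norm Nn" and Np: "is_norm Np"
    and GX: "G ** X = mat 1" and MM': "M ** M' = mat 1"
    and defect: "\<And>y. Np (X *v (M' *v ((M - L) *v y))) \<le> q * Nn y" and "0 \<le> q"
    and "0 \<le> lam" and budget: "lam + q * (Nn c + lam * op_norm Np Nn G) \<le> 1"
  shows "(\<lambda>b. L *v (c + lam *\<^sub>R (G *v b))) ` unit_ball Np
         \<subseteq> (\<lambda>x. M *v x) ` ((\<lambda>b. c + G *v b) ` unit_ball Np)"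
proof clarify
  fix b
  assume "b \<in> unit_ball Np"
  then have b: "Np b \<le> 1" by (simp add: unit_ball_def)
  define y where "y = c + lam *\<^sub>R (G *v b)"
  define b' where "b' = lam *\<^sub>R b - X *v (M' *v ((M - L) *v y))"
  have "Nn y \<le> Nn c + lam * Nn (G *v b)"
    unfolding y_def using is_norm_triangle[OF Nn] is_norm_scaleR[OF Nn] \<open>0 \<le> lam\<close>
    by (metis abs_of_nonneg)
  also have "\<dots> \<le> Nn c + lam * op_norm Np Nn G"
    using op_norm_le[OF Np Nn, of G b] op_norm_nonneg[OF Np Nn, of G] b \<open>0 \<le> lam\<close>
    by (intro add_left_mono mult_left_mono) (auto intro: order_trans mult_left_le)
  finally have y: "Nn y \<le> Nn c + lam * op_norm Np Nn G" .
  have "Np b' \<le> lam * Np b + q * Nn y"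
    unfolding b'_def using is_norm_diff_le[OF Np] is_norm_scaleR[OF Np] defect[of y] \<open>0 \<le> lam\<close>
    by (metis abs_of_nonneg add_left_mono order_trans)
  also have "\<dots> \<le> lam + q * (Nn c + lam * op_norm Np Nn G)"
    using b y \<open>0 \<le> lam\<close> \<open>0 \<le> q\<close> by (intro add_mono mult_left_mono) (auto intro: mult_left_le)
  finally have "b' \<in> unit_ball Np"
    using budget by (simp add: unit_ball_def)
  moreover have "c + G *v b' = y - M' *v ((M - L) *v y)"
    using matrix_vector_mul_assoc[of G X, unfolded GX]
    by (simp add: b'_def y_def matrix_vector_mult_diff_distrib scaleR_matrix_vector_assoc
        matrix_scaleR_vector_ac)
  then have "M *v (c + G *v b') = L *v y"
    using matrix_vector_mul_assoc[of M M', unfolded MM']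
    by (simp add: matrix_vector_mult_diff_distrib matrix_vector_mult_diff_rdistrib)
  ultimately show "L *v (c + lam *\<^sub>R (G *v b)) \<in> (\<lambda>x. M *v x) ` (\<lambda>b. c + G *v b) ` unit_ball Np"
    unfolding y_def by (metis image_eqI)
qed

definition defect_factor :: "(real^'n \<Rightarrow> real) \<Rightarrow> (real^'p \<Rightarrow> real) \<Rightarrow> real^'n^'n \<Rightarrow> real
     \<Rightarrow> nat \<Rightarrow> real^'n^'p \<Rightarrow> real" where
  "defect_factor Nn Np A t k X =
     exp (t * op_norm Nn Nn A) * theta (t * op_norm Nn Nn A) k * op_norm Nn Np X"

lemma defect_factor_nonneg:
  "is_norm Nn \<Longrightarrow> is_norm Np \<Longrightarrow> t \<ge> 0 \<Longrightarrow> 0 \<le> defect_factor Nn Np A t k X"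
  unfolding defect_factor_def
  by (intro mult_nonneg_nonneg theta_nonneg op_norm_nonneg) simp_all

lemma is_norm_truncation_defect_le:
  fixes Nn :: "real^'n \<Rightarrow> real" and Np :: "real^'p \<Rightarrow> real"
  assumes Nn: "is_norm Nn" and Np: "is_norm Np" and "t \<ge> 0"
  shows "Np (X *v (mexp (- (t *\<^sub>R A)) *v ((mexp (t *\<^sub>R A) - Ltrunc A t k) *v y)))
      \<le> defect_factor Nn Np A t k X * Nn y"
proof -
  let ?a = "op_norm Nn Nn A" and ?r = "(mexp (t *\<^sub>R A) - Ltrunc A t k) *v y"
  have "Np (X *v (mexp (- (t *\<^sub>R A)) *v ?r)) \<le> op_norm Nn Np X * Nn (mexp (- (t *\<^sub>R A)) *v ?r)"
    by (rule op_norm_le[OF Nn Np])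
  also have "\<dots> \<le> op_norm Nn Np X * (exp (t * ?a) * (theta (t * ?a) k * Nn y))"
    using is_norm_mexp_uminus_le[OF Nn \<open>t \<ge> 0\<close>, of A ?r]
      is_norm_mexp_minus_Ltrunc_le[OF Nn \<open>t \<ge> 0\<close>, of A k y] op_norm_nonneg[OF Nn Np]
    by (meson exp_ge_zero mult_left_mono order_trans)
  finally show ?thesis
    by (simp add: defect_factor_def mult_ac)
qed

lemma deflation_budget_eq:
  assumes Nn: "is_norm Nn" and Np: "is_norm Np" and "t \<ge> 0"
  shows "deflation Nn Np A t c G k
      + defect_factor Nn Np A t k (mp_inverse G) * (Nn c + deflation Nn Np A t c G k * op_norm Np Nn G) = 1"
proof -
  let ?q = "defect_factor Nn Np A t k (mp_inverse G)"
  have "0 < 1 + ?q * op_norm Np Nn G"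
    using defect_factor_nonneg[OF Nn Np \<open>t \<ge> 0\<close>] op_norm_nonneg[OF Np Nn]
    by (simp add: add_pos_nonneg)
  then have "deflation Nn Np A t c G k * (1 + ?q * op_norm Np Nn G) = 1 - ?q * Nn c"
    by (simp add: deflation_def defect_factor_def Let_def)
  then show ?thesis
    by (simp add: algebra_simps)
qed

theorem corollary1:
  fixes Nn :: "real^'n \<Rightarrow> real" and Np :: "real^'p \<Rightarrow> real"
    and A :: "real^'n^'n" and c :: "real^'n" and G :: "real^'p^'n"
    and t :: real and k :: nat
  assumes "is_norm Nn" and "is_norm Np"
    and "t \<ge> 0"
    and "rank G = CARD('n)"
    and "deflation Nn Np A t c G k \<ge> 0"
  shows "(\<lambda>b. Ltrunc A t k *v (c + deflation Nn Np A t c G k *\<^sub>R (G *v b))) ` unit_ball Np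
         \<subseteq> (\<lambda>x. mexp (t *\<^sub>R A) *v x) ` ((\<lambda>b. c + G *v b) ` unit_ball Np)"
  using image_deflated_zonotope_subset[OF assms(1,2) mp_inverse_right_inverse[OF assms(4)]
      mexp_mult_mexp_uminus is_norm_truncation_defect_le[OF assms(1-3)]
      defect_factor_nonneg[OF assms(1-3)] assms(5) deflation_budget_eq[OF assms(1-3), THEN eq_refl]] .

end
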